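(* There is a constant $C>0$ such that for all $n\ge 2$ and $D\ge 1$ there exist a deterministic distributed algorithm and, for every graph $G$ of size $n$ and diameter $D$, an advice assignment of size at most $C\,n\log n$, under which the algorithm accomplishes labeled topology recognition in $G$ within time $D$.
   Context: Graphs are finite, simple, undirected, connected, with no node labels; at each node of degree $d$ the incident edges carry distinct port numbers $0,\dots,d-1$ (no coherence between endpoints). Isomorphism is a bijection of nodes preserving edges and port numbers at both endpoints. Size = number of nodes; $\log$ is base 2. Communication model (LOCAL): synchronous rounds, all nodes start simultaneously; in each round every node may send arbitrary messages to all neighbours, receives their messages (knowing the arrival port), and performs arbitrary local computation. Initially a node knows only its degree and its advice. Advice: an oracle knowing the graph assigns each node a binary string; the size of advice is the maximum string length. All nodes run the same deterministic algorithm. Labeled topology recognition: all nodes output the same port-labeled graph $H$ with distinct node labels and each node its own label, such that some isomorphism $G\to H$ maps every node to the node carrying the label it output. Time is the number of rounds until all nodes have output. *)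

theory Defs
  imports Complex_Main
begin

text \<open>Nodes are a finite set of naturals (node names are invisible
to the algorithm; for an output graph H they serve as the distinct node labels).
pg_nbr G v p is the neighbour of v reached through port p (for p < pg_deg G v).\<close>

record pgraph =
  pg_nodes :: "nat set"
  pg_deg   :: "nat \<Rightarrow> nat"
  pg_nbr   :: "nat \<Rightarrow> nat \<Rightarrow> nat"

definition adj_rel :: "pgraph \<Rightarrow> (nat \<times> nat) set" where
  "adj_rel G = {(u, v). u \<in> pg_nodes G \<and> (\<exists>p < pg_deg G u. pg_nbr G u p = v)}"

definition pg_dist :: "pgraph \<Rightarrow> nat \<Rightarrow> nat \<Rightarrow> nat" where
  "pg_dist G u v = (LEAST k. (u, v) \<in> adj_rel G ^^ k)"

definition pg_connected :: "pgraph \<Rightarrow> bool" where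
  "pg_connected G \<longleftrightarrow> (\<forall>u\<in>pg_nodes G. \<forall>v\<in>pg_nodes G. (u, v) \<in> (adj_rel G)\<^sup>*)"

definition diameter :: "pgraph \<Rightarrow> nat" where
  "diameter G = Max {pg_dist G u v | u v. u \<in> pg_nodes G \<and> v \<in> pg_nodes G}"

text \<open>Finite, simple, undirected, connected graph with a valid port numbering:
ports 0..deg v - 1 at v lead to distinct neighbours (no loops, no multi-edges),
and every edge is seen from both endpoints.\<close>
definition pgraph_ok :: "pgraph \<Rightarrow> bool" where
  "pgraph_ok G \<longleftrightarrow>
     finite (pg_nodes G) \<and>
     (\<forall>v\<in>pg_nodes G. \<forall>p < pg_deg G v.
        pg_nbr G v p \<in> pg_nodes G \<and> pg_nbr G v p \<noteq> v \<and>
        (\<exists>q < pg_deg G (pg_nbr G v p). pg_nbr G (pg_nbr G v p) q = v)) \<and>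
     (\<forall>v\<in>pg_nodes G. inj_on (pg_nbr G v) {..<pg_deg G v}) \<and>
     pg_connected G"

definition pg_iso :: "pgraph \<Rightarrow> pgraph \<Rightarrow> (nat \<Rightarrow> nat) \<Rightarrow> bool" where
  "pg_iso G H f \<longleftrightarrow>
     bij_betw f (pg_nodes G) (pg_nodes H) \<and>
     (\<forall>v\<in>pg_nodes G. pg_deg H (f v) = pg_deg G v \<and>
        (\<forall>p < pg_deg G v. pg_nbr H (f v) p = f (pg_nbr G v p)))"

text \<open>Equality of port-labeled graphs as mathematical objects (ignoring junk values
of the representation outside the node set / port range).\<close>
definition pg_same :: "pgraph \<Rightarrow> pgraph \<Rightarrow> bool" where
  "pg_same H H' \<longleftrightarrow> pg_nodes H = pg_nodes H' \<and>
     (\<forall>v\<in>pg_nodes H. pg_deg H v = pg_deg H' v \<and>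
        (\<forall>p < pg_deg H v. pg_nbr H v p = pg_nbr H' v p))"

text \<open>Universal finite data type for local states and messages (arbitrary finite messages).\<close>
datatype data = DNat nat | DList "data list"

text \<open>A deterministic LOCAL algorithm (the same for all nodes):
initial state from degree and advice; message sent on each port; state transition from
the messages received, indexed by arrival port; output (graph H, own label) or None.\<close>
record algorithm =
  alg_init  :: "nat \<Rightarrow> bool list \<Rightarrow> data"
  alg_send  :: "data \<Rightarrow> nat \<Rightarrow> data"
  alg_trans :: "data \<Rightarrow> data list \<Rightarrow> data"
  alg_out   :: "data \<Rightarrow> (pgraph \<times> nat) option"

definition back_port :: "pgraph \<Rightarrow> nat \<Rightarrow> nat \<Rightarrow> nat" where
  "back_port G v p = (THE q. q < pg_deg G (pg_nbr G v p) \<and> pg_nbr G (pg_nbr G v p) q = v)"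

fun run_state :: "algorithm \<Rightarrow> pgraph \<Rightarrow> (nat \<Rightarrow> bool list) \<Rightarrow> nat \<Rightarrow> nat \<Rightarrow> data" where
  "run_state A G adv 0 v = alg_init A (pg_deg G v) (adv v)"
| "run_state A G adv (Suc t) v =
     alg_trans A (run_state A G adv t v)
       (map (\<lambda>p. alg_send A (run_state A G adv t (pg_nbr G v p)) (back_port G v p))
            [0..<pg_deg G v])"

definition out_time :: "algorithm \<Rightarrow> pgraph \<Rightarrow> (nat \<Rightarrow> bool list) \<Rightarrow> nat \<Rightarrow> nat" where
  "out_time A G adv v = (LEAST t. alg_out A (run_state A G adv t v) \<noteq> None)"

definition node_output :: "algorithm \<Rightarrow> pgraph \<Rightarrow> (nat \<Rightarrow> bool list) \<Rightarrow> nat \<Rightarrow> pgraph \<times> nat" where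
  "node_output A G adv v = the (alg_out A (run_state A G adv (out_time A G adv v) v))"

definition advice_size_le :: "pgraph \<Rightarrow> (nat \<Rightarrow> bool list) \<Rightarrow> real \<Rightarrow> bool" where
  "advice_size_le G adv b \<longleftrightarrow> (\<forall>v\<in>pg_nodes G. real (length (adv v)) \<le> b)"

definition solves_LTR :: "algorithm \<Rightarrow> pgraph \<Rightarrow> (nat \<Rightarrow> bool list) \<Rightarrow> nat \<Rightarrow> bool" where
  "solves_LTR A G adv T \<longleftrightarrow>
     (\<forall>v\<in>pg_nodes G. \<exists>t\<le>T. alg_out A (run_state A G adv t v) \<noteq> None) \<and>
     (\<exists>H f. (\<forall>v\<in>pg_nodes G. pg_same (fst (node_output A G adv v)) H) \<and>
            pg_iso G H f \<and>
            (\<forall>v\<in>pg_nodes G. f v = snd (node_output A G adv v)))"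

end

theory Submission imports Defs begin

text \<open>The oracle fixes a bijection f from the nodes onto {0..<n} and tells every node v,
in binary with \<lceil>log n\<rceil> bits per number, its own label f v followed by the labels of its
neighbours in port order; since deg v < n this is at most n \<lceil>log n\<rceil> bits. The algorithm
floods these adjacency entries: after t rounds a node knows the entries of all nodes within
distance t, so after D rounds every node knows all n entries, which together are exactly
the graph relabelled by f, and it outputs that graph with its own label.\<close>

lemma pgraph_ok_nbr_in:
  "pgraph_ok G \<Longrightarrow> v \<in> pg_nodes G \<Longrightarrow> p < pg_deg G v \<Longrightarrow> pg_nbr G v p \<in> pg_nodes G"
  unfolding pgraph_ok_def by blast

lemma pgraph_ok_deg_less_card:
  assumes ok: "pgraph_ok G" and v: "v \<in> pg_nodes G"
  shows "pg_deg G v < card (pg_nodes G)"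
proof -
  have fin: "finite (pg_nodes G)" using ok unfolding pgraph_ok_def by blast
  have inj: "inj_on (pg_nbr G v) {..<pg_deg G v}" using ok v unfolding pgraph_ok_def by blast
  have sub: "pg_nbr G v ` {..<pg_deg G v} \<subseteq> pg_nodes G - {v}"
    using ok v unfolding pgraph_ok_def by auto
  have "pg_deg G v = card (pg_nbr G v ` {..<pg_deg G v})" using card_image[OF inj] by simp
  also have "\<dots> \<le> card (pg_nodes G - {v})" using sub fin by (intro card_mono) auto
  also have "\<dots> < card (pg_nodes G)" using fin v by (meson card_Diff1_less)
  finally show ?thesis .
qed

lemma adj_relpow_pg_dist:
  assumes "pgraph_ok G" and "u \<in> pg_nodes G" and "v \<in> pg_nodes G"
  shows "(u, v) \<in> adj_rel G ^^ pg_dist G u v"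
proof -
  have "(u, v) \<in> (adj_rel G)\<^sup>*" using assms unfolding pgraph_ok_def pg_connected_def by blast
  then obtain k where "(u, v) \<in> adj_rel G ^^ k" using rtrancl_power by blast
  then show ?thesis unfolding pg_dist_def by (rule LeastI)
qed

lemma pg_dist_le_diameter:
  assumes ok: "pgraph_ok G" and "u \<in> pg_nodes G" and "v \<in> pg_nodes G"
  shows "pg_dist G u v \<le> diameter G"
proof -
  have "{pg_dist G u v | u v. u \<in> pg_nodes G \<and> v \<in> pg_nodes G}
      = (\<lambda>(u, v). pg_dist G u v) ` (pg_nodes G \<times> pg_nodes G)" by auto
  moreover have "finite (pg_nodes G)" using ok unfolding pgraph_ok_def by blast
  ultimately show ?thesis unfolding diameter_def using assms by (intro Max_ge) auto
qed

fun bin_enc :: "nat \<Rightarrow> nat \<Rightarrow> bool list" where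
  "bin_enc 0 k = []"
| "bin_enc (Suc w) k = odd k # bin_enc w (k div 2)"

fun bin_dec :: "bool list \<Rightarrow> nat" where
  "bin_dec [] = 0"
| "bin_dec (b # bs) = of_bool b + 2 * bin_dec bs"

lemma length_bin_enc [simp]: "length (bin_enc w k) = w"
  by (induction w arbitrary: k) auto

lemma bin_dec_bin_enc: "bin_dec (bin_enc w k) = k mod 2 ^ w"
proof (induction w arbitrary: k)
  case 0
  then show ?case by simp
next
  case (Suc w)
  have "k mod 2 ^ Suc w = 2 * (k div 2 mod 2 ^ w) + k mod 2"
    by (metis mod_mult2_eq power_Suc)
  then show ?case using Suc by (simp add: odd_iff_mod_2_eq_one)
qed

lemma bin_dec_bin_enc_less: "k < 2 ^ w \<Longrightarrow> bin_dec (bin_enc w k) = k"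
  by (simp add: bin_dec_bin_enc)

lemma take_drop_concat_same_length:
  assumes "\<forall>x\<in>set xs. length x = w" and "i < length xs"
  shows "take w (drop (w * i) (concat xs)) = xs ! i"
  using assms
proof (induction xs arbitrary: i)
  case Nil
  then show ?case by simp
next
  case (Cons x xs)
  then show ?case by (cases i) (auto simp: drop_append)
qed

text \<open>An entry records a label together with the labels of its neighbours in port order;
a node state is its own label together with the list of entries known so far.\<close>

definition entry_data :: "nat \<Rightarrow> nat list \<Rightarrow> data" where
  "entry_data a ns = DList [DNat a, DList (map DNat ns)]"

definition node_state :: "nat \<Rightarrow> data list \<Rightarrow> data" where
  "node_state l es = DList [DNat l, DList es]"

fun state_label :: "data \<Rightarrow> nat" where
  "state_label (DList (DNat l # _)) = l"
| "state_label _ = 0"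

fun state_entries :: "data \<Rightarrow> data list" where
  "state_entries (DList [_, DList es]) = es"
| "state_entries _ = []"

lemma state_label_node_state [simp]: "state_label (node_state l es) = l"
  and state_entries_node_state [simp]: "state_entries (node_state l es) = es"
  by (simp_all add: node_state_def)

lemma entry_data_inject [simp]: "entry_data a ns = entry_data b ms \<longleftrightarrow> a = b \<and> ns = ms"
  by (auto simp: entry_data_def inj_map_eq_map inj_on_def)

definition init_state :: "nat \<Rightarrow> nat \<Rightarrow> bool list \<Rightarrow> data" where
  "init_state w d bs =
     (let l = bin_dec (take w bs);
          ns = map (\<lambda>i. bin_dec (take w (drop (w * Suc i) bs))) [0..<d]
      in node_state l [entry_data l ns])"

definition entry_nbrs :: "data list \<Rightarrow> nat \<Rightarrow> nat list" where
  "entry_nbrs es a = (SOME ns. entry_data a ns \<in> set es)"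

definition graph_of_entries :: "nat \<Rightarrow> data list \<Rightarrow> pgraph" where
  "graph_of_entries n es =
     \<lparr>pg_nodes = {0..<n}, pg_deg = \<lambda>a. length (entry_nbrs es a),
      pg_nbr = \<lambda>a p. entry_nbrs es a ! p\<rparr>"

definition output_of :: "nat \<Rightarrow> data \<Rightarrow> (pgraph \<times> nat) option" where
  "output_of n s =
     (if \<forall>a<n. \<exists>ns. entry_data a ns \<in> set (state_entries s)
      then Some (graph_of_entries n (state_entries s), state_label s) else None)"

definition flooding_alg :: "nat \<Rightarrow> nat \<Rightarrow> algorithm" where
  "flooding_alg w n =
     \<lparr>alg_init = init_state w, alg_send = \<lambda>s p. s,
      alg_trans = \<lambda>s ms. node_state (state_label s) (state_entries s @ concat (map state_entries ms)),
      alg_out = output_of n\<rparr>"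

definition label_advice :: "nat \<Rightarrow> pgraph \<Rightarrow> (nat \<Rightarrow> nat) \<Rightarrow> nat \<Rightarrow> bool list" where
  "label_advice w G f v =
     bin_enc w (f v) @ concat (map (\<lambda>p. bin_enc w (f (pg_nbr G v p))) [0..<pg_deg G v])"

locale graph_labelling =
  fixes G :: pgraph and f :: "nat \<Rightarrow> nat" and n w :: nat
  assumes ok: "pgraph_ok G"
    and bij: "bij_betw f (pg_nodes G) {0..<n}"
    and labels_fit: "n \<le> 2 ^ w"
begin

abbreviation "N \<equiv> pg_nodes G"
abbreviation "A \<equiv> flooding_alg w n"
abbreviation "adv \<equiv> label_advice w G f"
abbreviation "state \<equiv> run_state A G adv"

definition entry :: "nat \<Rightarrow> data" where
  "entry v = entry_data (f v) (map (\<lambda>p. f (pg_nbr G v p)) [0..<pg_deg G v])"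

definition node_of :: "nat \<Rightarrow> nat" where
  "node_of = inv_into N f"

definition labelled_graph :: pgraph where
  "labelled_graph = \<lparr>pg_nodes = {0..<n}, pg_deg = \<lambda>a. pg_deg G (node_of a),
     pg_nbr = \<lambda>a p. f (pg_nbr G (node_of a) p)\<rparr>"

definition known :: "nat \<Rightarrow> nat \<Rightarrow> data list" where
  "known t v = state_entries (state t v)"

lemma label_less: "v \<in> N \<Longrightarrow> f v < n"
  using bij bij_betwE by fastforce

lemma node_of_label: "v \<in> N \<Longrightarrow> node_of (f v) = v"
  unfolding node_of_def using bij bij_betw_def by (metis inv_into_f_f)

lemma node_of_in: "a < n \<Longrightarrow> node_of a \<in> N \<and> f (node_of a) = a"
proof -
  assume "a < n"
  then have "a \<in> f ` N" using bij unfolding bij_betw_def by auto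
  then show ?thesis using inv_into_into f_inv_into_f unfolding node_of_def by metis
qed

lemma init_state_label_advice:
  assumes v: "v \<in> N"
  shows "init_state w (pg_deg G v) (adv v) = node_state (f v) [entry v]"
proof -
  have dec: "u \<in> N \<Longrightarrow> bin_dec (bin_enc w (f u)) = f u" for u
    using label_less labels_fit by (intro bin_dec_bin_enc_less) (meson less_le_trans)
  let ?xs = "map (\<lambda>p. bin_enc w (f (pg_nbr G v p))) [0..<pg_deg G v]"
  have own: "take w (adv v) = bin_enc w (f v)" by (simp add: label_advice_def)
  have nbr: "take w (drop (w * Suc i) (adv v)) = bin_enc w (f (pg_nbr G v i))"
    if "i < pg_deg G v" for i
  proof -
    have "drop (w * Suc i) (adv v) = drop (w * i) (concat ?xs)"
      by (simp add: label_advice_def drop_append)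
    then show ?thesis using take_drop_concat_same_length[of ?xs w i] that by simp
  qed
  have "map (\<lambda>i. bin_dec (take w (drop (w * Suc i) (adv v)))) [0..<pg_deg G v]
      = map (\<lambda>p. f (pg_nbr G v p)) [0..<pg_deg G v]"
    by (rule map_cong) (auto simp del: mult_Suc_right simp: nbr dec pgraph_ok_nbr_in[OF ok v])
  then show ?thesis unfolding init_state_def Let_def own entry_def dec[OF v] by (rule arg_cong)
qed

lemma known_Suc:
  "known (Suc t) v = known t v @ concat (map (\<lambda>p. known t (pg_nbr G v p)) [0..<pg_deg G v])"
  by (simp add: known_def flooding_alg_def comp_def)

lemma state_eq: "v \<in> N \<Longrightarrow> state t v = node_state (f v) (known t v) \<and> set (known t v) \<subseteq> entry ` N"
proof (induction t arbitrary: v)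
  case 0
  then show ?case by (simp add: known_def flooding_alg_def init_state_label_advice)
next
  case (Suc t)
  have "state (Suc t) v = node_state (state_label (state t v)) (known (Suc t) v)"
    by (simp add: known_def flooding_alg_def comp_def)
  moreover have "state_label (state t v) = f v" using Suc.IH[OF Suc.prems] by simp
  moreover have "set (known (Suc t) v) \<subseteq> entry ` N"
    using Suc pgraph_ok_nbr_in[OF ok] unfolding known_Suc by fastforce
  ultimately show ?case by simp
qed

lemma known_mono: "t \<le> t' \<Longrightarrow> set (known t v) \<subseteq> set (known t' v)"
  using lift_Suc_mono_le[of "\<lambda>t. set (known t v)"] unfolding known_Suc by auto

lemma entry_in_known:
  "(v, u) \<in> adj_rel G ^^ k \<Longrightarrow> k \<le> t \<Longrightarrow> v \<in> N \<Longrightarrow> entry u \<in> set (known t v)"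
proof (induction k arbitrary: t v)
  case 0
  then show ?case using known_mono[of 0 t v]
    by (auto simp: known_def flooding_alg_def init_state_label_advice)
next
  case (Suc k)
  then obtain x where x: "(v, x) \<in> adj_rel G" "(x, u) \<in> adj_rel G ^^ k"
    by (metis relpow_Suc_D2)
  obtain p where p: "p < pg_deg G v" "pg_nbr G v p = x" using x(1) unfolding adj_rel_def by auto
  obtain t' where t: "t = Suc t'" "k \<le> t'" using Suc(3) by (cases t) auto
  have "entry u \<in> set (known t' x)"
    using Suc.IH[OF x(2) t(2)] pgraph_ok_nbr_in[OF ok] p Suc(4) by blast
  then show ?case unfolding t known_Suc using p by force
qed

lemma known_entry_eq:
  assumes "v \<in> N" and "entry_data a ns \<in> set (known t v)"
  shows "ns = map (\<lambda>p. f (pg_nbr G (node_of a) p)) [0..<pg_deg G (node_of a)]"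
proof -
  obtain u where "u \<in> N" "entry_data a ns = entry u" using state_eq assms by blast
  then show ?thesis unfolding entry_def by (auto simp: node_of_label)
qed

lemma output_correct:
  assumes v: "v \<in> N" and out: "output_of n (state t v) = Some r"
  shows "pg_same (fst r) labelled_graph \<and> snd r = f v"
proof -
  have st: "state t v = node_state (f v) (known t v)" using state_eq[OF v] by blast
  have all: "\<forall>a<n. \<exists>ns. entry_data a ns \<in> set (known t v)"
    and r: "r = (graph_of_entries n (known t v), f v)"
    using out unfolding st output_of_def by (auto split: if_splits)
  have "entry_nbrs (known t v) a = map (\<lambda>p. f (pg_nbr G (node_of a) p)) [0..<pg_deg G (node_of a)]"
    if a: "a < n" for a
  proof -
    obtain ns where "entry_data a ns \<in> set (known t v)" using all a by blast
    then have "entry_data a (entry_nbrs (known t v) a) \<in> set (known t v)"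
      unfolding entry_nbrs_def by (rule someI)
    then show ?thesis using known_entry_eq v by blast
  qed
  then show ?thesis unfolding r pg_same_def graph_of_entries_def labelled_graph_def by simp
qed

lemma output_at_diameter: "v \<in> N \<Longrightarrow> output_of n (state (diameter G) v) \<noteq> None"
proof -
  assume v: "v \<in> N"
  have "\<exists>ns. entry_data a ns \<in> set (known (diameter G) v)" if a: "a < n" for a
  proof -
    have "entry (node_of a) \<in> set (known (diameter G) v)"
      using node_of_in[OF a] adj_relpow_pg_dist[OF ok v] pg_dist_le_diameter[OF ok v]
        entry_in_known[OF _ _ v] by blast
    then show ?thesis unfolding entry_def using node_of_in[OF a] by auto
  qed
  then show ?thesis using state_eq[OF v] unfolding output_of_def by simp
qed

lemma solves_LTR_flooding: "solves_LTR A G adv (diameter G)"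
proof -
  have out: "alg_out A = output_of n" by (simp add: flooding_alg_def)
  have outputs: "pg_same (fst (node_output A G adv v)) labelled_graph
      \<and> snd (node_output A G adv v) = f v" if v: "v \<in> N" for v
  proof -
    have "alg_out A (state (out_time A G adv v) v) \<noteq> None"
      unfolding out_time_def using output_at_diameter[OF v] out by (metis (mono_tags) LeastI)
    then obtain r where r: "output_of n (state (out_time A G adv v) v) = Some r"
      unfolding out by blast
    then have "node_output A G adv v = r" unfolding node_output_def out by simp
    then show ?thesis using output_correct[OF v r] by simp
  qed
  have "pg_iso G labelled_graph f"
    unfolding pg_iso_def labelled_graph_def using bij node_of_label by simp
  then show ?thesis unfolding solves_LTR_def
    using output_at_diameter out outputs by (metis order_refl)
qed

lemma length_label_advice: "v \<in> N \<Longrightarrow> length (adv v) \<le> w * n"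
proof -
  assume v: "v \<in> N"
  have "card N = n" using bij bij_betw_same_card by fastforce
  then have "w * (pg_deg G v + 1) \<le> w * n"
    using pgraph_ok_deg_less_card[OF ok v] by (intro mult_le_mono2) simp
  then show ?thesis by (simp add: label_advice_def length_concat sum_list_triv comp_def algebra_simps)
qed

end

definition label_width :: "nat \<Rightarrow> nat" where
  "label_width n = nat \<lceil>log 2 (real n)\<rceil>"

lemma
  assumes "n \<ge> 2"
  shows label_width_le: "real (label_width n) \<le> 2 * log 2 (real n)"
    and le_two_power_label_width: "n \<le> 2 ^ label_width n"
proof -
  have one: "log 2 (real n) \<ge> 1" using assms by simp
  then have lw: "real (label_width n) = real_of_int \<lceil>log 2 (real n)\<rceil>"
    unfolding label_width_def by simp
  show "real (label_width n) \<le> 2 * log 2 (real n)"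
    unfolding lw using one by (smt (verit) of_int_ceiling_le_add_one)
  have "real n = 2 powr log 2 (real n)" using assms by simp
  also have "\<dots> \<le> 2 powr real (label_width n)" unfolding lw by (intro powr_mono) auto
  also have "\<dots> = real (2 ^ label_width n)" by (simp add: powr_realpow)
  finally show "n \<le> 2 ^ label_width n" by linarith
qed

lemma flooding_recognizes_labelled_topology:
  fixes n D :: nat
  assumes n: "n \<ge> 2"
  shows "\<forall>G. pgraph_ok G \<and> card (pg_nodes G) = n \<and> diameter G = D \<longrightarrow>
    (\<exists>adv. advice_size_le G adv (2 * real n * log 2 (real n)) \<and>
      solves_LTR (flooding_alg (label_width n) n) G adv D)"
proof (intro allI impI)
  fix G
  assume G: "pgraph_ok G \<and> card (pg_nodes G) = n \<and> diameter G = D"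
  let ?w = "label_width n"
  obtain f where f: "bij_betw f (pg_nodes G) {0..<n}"
    using G ex_bij_betw_finite_nat unfolding pgraph_ok_def by blast
  interpret graph_labelling G f n ?w
    using G f le_two_power_label_width[OF n] by unfold_locales auto
  have "real (length (adv v)) \<le> 2 * real n * log 2 (real n)" if "v \<in> N" for v
  proof -
    have "real (length (adv v)) \<le> real ?w * real n"
      using length_label_advice[OF that] by (metis of_nat_le_iff of_nat_mult)
    also have "\<dots> \<le> 2 * log 2 (real n) * real n"
      using label_width_le[OF n] by (intro mult_right_mono) auto
    finally show ?thesis by (simp add: algebra_simps)
  qed
  then show "\<exists>adv. advice_size_le G adv (2 * real n * log 2 (real n)) \<and> solves_LTR A G adv D"
    using solves_LTR_flooding G unfolding advice_size_le_def by auto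
qed

theorem proposition5p1:
  shows "\<exists>C::real. C > 0 \<and>
    (\<forall>n D::nat. n \<ge> 2 \<longrightarrow> D \<ge> 1 \<longrightarrow>
      (\<exists>A::algorithm. \<forall>G::pgraph.
         pgraph_ok G \<and> card (pg_nodes G) = n \<and> diameter G = D \<longrightarrow>
         (\<exists>adv. advice_size_le G adv (C * real n * log 2 (real n)) \<and>
                solves_LTR A G adv D)))"
  using flooding_recognizes_labelled_topology by (intro exI[of _ 2] conjI allI impI) (simp, blast)

end
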